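(* For every $n\ge1$, the set $F_n$ is full. Equivalently, the $(5n+3)\times(5n+3)$ matrix $M_n$ is invertible.
   Context: Let $X_1,X_2,X_3$ be pairwise disjoint nonempty sets and $\Omega=X_1\times X_2\times X_3$, with projections $\Pi_i:\Omega\to X_i$. A set $S\subset\Omega$ is good if every function $f:S\to\mathbb C$ can be written $f(w_1,w_2,w_3)=u_1(w_1)+u_2(w_2)+u_3(w_3)$ for all $(w_1,w_2,w_3)\in S$, for some functions $u_i:X_i\to\mathbb C$. A set $S$ is full if it is a maximal good subset of $\Pi_1S\times\Pi_2S\times\Pi_3S$. Construction: fix pairwise distinct elements $x_1,y_1,\alpha_{5k-4},\alpha_{5k-1}$ ($k\ge1$) of $X_1$; pairwise distinct elements $x_2,y_2,\alpha_{5k-3},\alpha_{5k}$ ($k\ge1$) of $X_2$; pairwise distinct elements $x_3,z_3,\alpha_{5k-2}$ ($k\ge1$) of $X_3$. Set the convention $\alpha_{-3}:=y_2$, $\alpha_{-2}:=z_3$. Define $a_1=(x_1,x_2,x_3)$, $a_2=(y_1,y_2,x_3)$, $a_3=(y_1,x_2,z_3)$ and for $n\ge1$: $a_{5n-1}=(\alpha_{5n-4},\alpha_{5n-3},\alpha_{5n-2})$, $a_{5n}=(\alpha_{5n-1},\alpha_{5n},\alpha_{5n-2})$, $a_{5n+1}=(\alpha_{5n-4},\alpha_{5n},\alpha_{5n-7})$, $a_{5n+2}=(\alpha_{5n-1},\alpha_{5n-3},x_3)$, $a_{5n+3}=(x_1,\alpha_{5n-8},\alpha_{5n-2})$. Let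 $D_n=\{a_1,\dots,a_{5n+3}\}$, $b_n=(\alpha_{5n-1},y_2,z_3)$ and $F_n=D_n\cup\{b_n\}$. Let $M_n$ be the $0$–$1$ matrix whose rows are indexed by the points $a_2,a_3,\dots,a_{5n+3},b_n$ (in this order) and whose columns are indexed by $y_1,y_2,z_3,\alpha_1,\alpha_2,\dots,\alpha_{5n}$ (in this order), the entry being $1$ exactly when the column element is a coordinate of the row point. *)

theory Defs
  imports Complex_Main
begin

definition good :: "'a set \<Rightarrow> 'a set \<Rightarrow> 'a set \<Rightarrow> ('a \<times> 'a \<times> 'a) set \<Rightarrow> bool" where
  "good X1 X2 X3 S \<longleftrightarrow> S \<subseteq> X1 \<times> X2 \<times> X3 \<and>
     (\<forall>f :: 'a \<times> 'a \<times> 'a \<Rightarrow> complex. \<exists>u1 u2 u3 :: 'a \<Rightarrow> complex.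
        \<forall>(w1, w2, w3) \<in> S. f (w1, w2, w3) = u1 w1 + u2 w2 + u3 w3)"

definition full :: "'a set \<Rightarrow> 'a set \<Rightarrow> 'a set \<Rightarrow> ('a \<times> 'a \<times> 'a) set \<Rightarrow> bool" where
  "full X1 X2 X3 S \<longleftrightarrow> good X1 X2 X3 S \<and>
     (\<forall>T. S \<subset> T \<and> T \<subseteq> fst ` S \<times> (fst \<circ> snd) ` S \<times> (snd \<circ> snd) ` S \<longrightarrow> \<not> good X1 X2 X3 T)"

definition al :: "(nat \<Rightarrow> 'a) \<Rightarrow> 'a \<Rightarrow> 'a \<Rightarrow> int \<Rightarrow> 'a" where
  "al \<alpha> y2 z3 i = (if i = -3 then y2 else if i = -2 then z3 else \<alpha> (nat i))"

text \<open>Block k (k >= 1): the points a(5k-1), a(5k), a(5k+1), a(5k+2), a(5k+3).\<close>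
definition blk :: "'a \<Rightarrow> 'a \<Rightarrow> 'a \<Rightarrow> 'a \<Rightarrow> (nat \<Rightarrow> 'a) \<Rightarrow> nat \<Rightarrow> ('a \<times> 'a \<times> 'a) set" where
  "blk x1 x3 y2 z3 \<alpha> k = (let A = al \<alpha> y2 z3; m = int k in
     {(A (5*m-4), A (5*m-3), A (5*m-2)),
      (A (5*m-1), A (5*m), A (5*m-2)),
      (A (5*m-4), A (5*m), A (5*m-7)),
      (A (5*m-1), A (5*m-3), x3),
      (x1, A (5*m-8), A (5*m-2))})"

definition Dset :: "'a \<Rightarrow> 'a \<Rightarrow> 'a \<Rightarrow> 'a \<Rightarrow> 'a \<Rightarrow> 'a \<Rightarrow> (nat \<Rightarrow> 'a) \<Rightarrow> nat \<Rightarrow> ('a \<times> 'a \<times> 'a) set" where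
  "Dset x1 y1 x2 y2 x3 z3 \<alpha> n =
     {(x1, x2, x3), (y1, y2, x3), (y1, x2, z3)} \<union> (\<Union>k\<in>{1..n}. blk x1 x3 y2 z3 \<alpha> k)"

definition Fset :: "'a \<Rightarrow> 'a \<Rightarrow> 'a \<Rightarrow> 'a \<Rightarrow> 'a \<Rightarrow> 'a \<Rightarrow> (nat \<Rightarrow> 'a) \<Rightarrow> nat \<Rightarrow> ('a \<times> 'a \<times> 'a) set" where
  "Fset x1 y1 x2 y2 x3 z3 \<alpha> n = insert (\<alpha> (5*n-1), y2, z3) (Dset x1 y1 x2 y2 x3 z3 \<alpha> n)"

end

theory Submission
  imports Defs
begin

(* Both halves reduce to the square linear system with coefficient matrix M_n.  Its unknowns
   are the values u(y1), u(y2), u(z3), u(alpha_1), ..., u(alpha_{5n}) of a potential u (the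
   values at x1, x2, x3 can be normalised), and its equations are "u(w1)+u(w2)+u(w3) = f(w)"
   for the points w of F_n other than a_1.  We show that this system is solvable for every
   right-hand side (an explicit recursion over the blocks) and that its homogeneous version
   has only the trivial solution (induction over the blocks); together this is the
   invertibility of M_n. *)

(* A good set is full as soon as every triple of functions summing to zero on S sums to zero
   on the whole box of its projections: a point t outside S would otherwise allow the
   indicator of t to be decomposed, which is impossible. *)
lemma full_if_trivial_kernel:
  assumes good: "good X1 X2 X3 S"
    and kernel: "\<And>u1 u2 u3 :: 'a \<Rightarrow> complex. \<forall>(w1, w2, w3) \<in> S. u1 w1 + u2 w2 + u3 w3 = 0 \<Longrightarrow>
       \<forall>(w1, w2, w3) \<in> fst ` S \<times> (fst \<circ> snd) ` S \<times> (snd \<circ> snd) ` S. u1 w1 + u2 w2 + u3 w3 = 0"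
  shows "full X1 X2 X3 S"
  unfolding full_def
proof (intro conjI good allI impI notI)
  fix T assume T: "S \<subset> T \<and> T \<subseteq> fst ` S \<times> (fst \<circ> snd) ` S \<times> (snd \<circ> snd) ` S"
    and good_T: "good X1 X2 X3 T"
  obtain t1 t2 t3 where t: "(t1, t2, t3) \<in> T" "(t1, t2, t3) \<notin> S" using T by auto
  define f where "f w = (if w = (t1, t2, t3) then 1 else 0 :: complex)" for w
  obtain u1 u2 u3 :: "'a \<Rightarrow> complex"
    where u: "\<forall>(w1, w2, w3) \<in> T. f (w1, w2, w3) = u1 w1 + u2 w2 + u3 w3"
    using good_T unfolding good_def by blast
  have "u1 w1 + u2 w2 + u3 w3 = 0" if "(w1, w2, w3) \<in> S" for w1 w2 w3
  proof -
    have "(w1, w2, w3) \<in> T" "(w1, w2, w3) \<noteq> (t1, t2, t3)" using that T t(2) by auto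
    then show ?thesis using u by (auto simp: f_def)
  qed
  then have "\<forall>(w1, w2, w3) \<in> fst ` S \<times> (fst \<circ> snd) ` S \<times> (snd \<circ> snd) ` S. u1 w1 + u2 w2 + u3 w3 = 0"
    by (intro kernel) auto
  moreover have "(t1, t2, t3) \<in> fst ` S \<times> (fst \<circ> snd) ` S \<times> (snd \<circ> snd) ` S" using T t(1) by blast
  ultimately have "u1 t1 + u2 t2 + u3 t3 = 0" by auto
  moreover have "u1 t1 + u2 t2 + u3 t3 = 1" using u t(1) by (auto simp: f_def)
  ultimately show False by simp
qed

(* The linear system M_n v = (r, s): rows a_2, a_3, b_n and the five rows of each block k,
   unknowns y = v(y1), b k = v(B_k), c k = v(C_k) (with B_0 = y2, C_0 = z3) and
   a k, d k, e k = v(alpha_{5k-4}), v(alpha_{5k-1}), v(alpha_{5k}).  The right-hand sides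
   r1 ... r5 belong to the rows a_{5k-1}, ..., a_{5k+3} of block k. *)
definition Mn_system ::
  "nat \<Rightarrow> (nat \<Rightarrow> complex) \<Rightarrow> (nat \<Rightarrow> complex) \<Rightarrow> (nat \<Rightarrow> complex) \<Rightarrow> (nat \<Rightarrow> complex) \<Rightarrow>
   (nat \<Rightarrow> complex) \<Rightarrow> complex \<Rightarrow> complex \<Rightarrow> complex \<Rightarrow>
   complex \<Rightarrow> (nat \<Rightarrow> complex) \<Rightarrow> (nat \<Rightarrow> complex) \<Rightarrow> (nat \<Rightarrow> complex) \<Rightarrow> (nat \<Rightarrow> complex) \<Rightarrow>
   (nat \<Rightarrow> complex) \<Rightarrow> bool" where
  "Mn_system n r1 r2 r3 r4 r5 s2 s3 sb y a b c d e \<longleftrightarrow>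
     y + b 0 = s2 \<and> y + c 0 = s3 \<and> d n + b 0 + c 0 = sb \<and>
     (\<forall>k\<in>{1..n}. a k + b k + c k = r1 k \<and> d k + e k + c k = r2 k \<and> a k + e k + c (k-1) = r3 k \<and>
                 d k + b k = r4 k \<and> b (k-1) + c k = r5 k)"

(* Eliminating a block: its five equations force one linear relation between the unknowns
   b' = b(k-1), c' = c(k-1) attached to the previous block. *)
lemma block_reduction:
  fixes a b c d e b' c' r1 r2 r3 r4 r5 :: complex
  assumes "a + b + c = r1" "d + e + c = r2" "a + e + c' = r3" "d + b = r4" "b' + c = r5"
  shows "2 * b' + c' = 2 * r5 + r3 + r4 - r1 - r2"
  using assms by (auto simp: algebra_simps)

lemma block_completion:
  fixes a b c d e b' c' r1 r2 r3 r4 r5 :: complex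
  assumes "a = r1 - b - c" "d = r4 - b" "e = r2 - c - d" "c = r5 - b'"
    and "2 * b' + c' = 2 * r5 + r3 + r4 - r1 - r2"
  shows "a + e + c' = r3"
proof -
  have "a + e + c' = r1 + r2 - r4 - 2 * r5 + (2 * b' + c')"
    unfolding assms(1-4) by algebra
  then show ?thesis using assms(5) by simp
qed

(* Existence: b 0 and c 0 are fixed by rows a_2, a_3 and the relation of block 1; then
   b (k+1) is determined by the relation of block k+2, except b n which is read off row b_n. *)
lemma Mn_system_solvable:
  assumes "n \<ge> 1"
  shows "\<exists>y a b c d e. Mn_system n r1 r2 r3 r4 r5 s2 s3 sb y a b c d e"
proof -
  define R where "R k = 2 * r5 k + r3 k + r4 k - r1 k - r2 k" for k
  define b0 where "b0 = (R 1 - s3 + s2) / 3"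
  define c0 where "c0 = s3 - s2 + b0"
  define bs where "bs = rec_nat b0 (\<lambda>k v. (R (k+2) - r5 (k+1) + v) / 2)"
  define b where "b k = (if k = n then r4 n + b0 + c0 - sb else bs k)" for k
  define c where "c k = (if k = 0 then c0 else r5 k - b (k-1))" for k
  define a where "a k = r1 k - b k - c k" for k
  define d where "d k = r4 k - b k" for k
  define e where "e k = r2 k - c k - d k" for k
  have b_0: "b 0 = b0" and c_0: "c 0 = c0"
    using assms by (simp_all add: b_def c_def bs_def)
  have reduced_step: "2 * b (Suc m) + c (Suc m) = R (Suc (Suc m))" if "Suc (Suc m) \<le> n" for m
    using that by (simp add: b_def c_def bs_def field_simps)
  have reduced: "2 * b (k-1) + c (k-1) = R k" if "k \<in> {1..n}" for k
  proof (cases k)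
    case (Suc j)
    show ?thesis
    proof (cases j)
      case 0
      then show ?thesis using Suc by (simp add: b_0 c_0 c0_def b0_def field_simps)
    next
      case (Suc m)
      then show ?thesis using reduced_step[of m] \<open>k = Suc j\<close> that by simp
    qed
  qed (use that in simp)
  have "b n = r4 n + b0 + c0 - sb" by (simp add: b_def)
  then have "Mn_system n r1 r2 r3 r4 r5 s2 s3 sb (s2 - b0) a b c d e"
    unfolding Mn_system_def
    using block_completion[OF a_def d_def e_def _ reduced[unfolded R_def]]
    by (auto simp: a_def d_def e_def c_def b_0 c_0 c0_def)
  then show ?thesis by blast
qed

(* Uniqueness: in the homogeneous system b j = c j = 0 propagates from j = 0 up to n - 1
   through the block relations; row b_n then kills b n, and the block rows kill the rest. *)
lemma Mn_system_kernel:
  assumes n: "n \<ge> 1"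
    and hom: "Mn_system n (\<lambda>_. 0) (\<lambda>_. 0) (\<lambda>_. 0) (\<lambda>_. 0) (\<lambda>_. 0) 0 0 0 y a b c d e"
  shows "y = 0" "\<And>k. k \<le> n \<Longrightarrow> b k = 0 \<and> c k = 0"
    "\<And>k. k \<in> {1..n} \<Longrightarrow> a k = 0 \<and> d k = 0 \<and> e k = 0"
proof -
  have init: "y + b 0 = 0" "y + c 0 = 0" "d n + b 0 + c 0 = 0"
    using hom unfolding Mn_system_def by simp_all
  have blk: "a k + b k + c k = 0" "d k + e k + c k = 0" "a k + e k + c (k-1) = 0"
    "d k + b k = 0" "b (k-1) + c k = 0" if "k \<in> {1..n}" for k
    using hom that unfolding Mn_system_def by blast+
  have reduced: "2 * b (k-1) + c (k-1) = 0" if "k \<in> {1..n}" for k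
    using block_reduction[OF blk[OF that]] by simp
  have below_n: "b j = 0 \<and> c j = 0" if "j < n" for j
    using that
  proof (induction j)
    case 0
    have "b 0 = c 0" using init(1,2) by (simp add: add_eq_0_iff)
    moreover have "2 * b 0 + c 0 = 0" using reduced[of 1] n by simp
    ultimately show ?case by simp
  next
    case (Suc j)
    then have "b j + c (Suc j) = 0" using blk(5)[of "Suc j"] by simp
    then have "c (Suc j) = 0" using Suc by simp
    then show ?case using reduced[of "Suc (Suc j)"] Suc.prems by simp
  qed
  have "c n = 0" using blk(5)[of n] below_n[of "n-1"] n by simp
  moreover have "d n = 0" using init below_n[of 0] n by simp
  then have "b n = 0" using blk(4)[of n] n by simp
  ultimately show bc: "b k = 0 \<and> c k = 0" if "k \<le> n" for k
    using below_n[of k] that by (cases "k = n") auto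
  show "y = 0" using init(1) bc[of 0] by simp
  show "a k = 0 \<and> d k = 0 \<and> e k = 0" if "k \<in> {1..n}" for k
    using blk[OF that] bc[of k] that by simp
qed

(* The second and third coordinates of block k, written B_k and C_k; the convention
   alpha(-3) = y2, alpha(-2) = z3 of the construction is exactly B_0 = y2, C_0 = z3. *)
definition coordB :: "'a \<Rightarrow> (nat \<Rightarrow> 'a) \<Rightarrow> nat \<Rightarrow> 'a" where
  "coordB y2 \<alpha> k = (if k = 0 then y2 else \<alpha> (5*k-3))"

definition coordC :: "'a \<Rightarrow> (nat \<Rightarrow> 'a) \<Rightarrow> nat \<Rightarrow> 'a" where
  "coordC z3 \<alpha> k = (if k = 0 then z3 else \<alpha> (5*k-2))"

lemma al_coordB: "al \<alpha> y2 z3 (5 * int k - 3) = coordB y2 \<alpha> k"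
proof (cases "k = 0")
  case False
  then have idx: "5 * int k - 3 = int (5*k-3)" by auto
  have "nat (5 * int k - 3) = 5*k-3" unfolding idx by (rule nat_int)
  moreover have "5 * int k - 3 \<noteq> -3" "5 * int k - 3 \<noteq> -2" using False by auto
  ultimately show ?thesis using False by (simp add: al_def coordB_def)
qed (simp add: al_def coordB_def)

lemma al_coordC: "al \<alpha> y2 z3 (5 * int k - 2) = coordC z3 \<alpha> k"
proof (cases "k = 0")
  case False
  then have idx: "5 * int k - 2 = int (5*k-2)" by auto
  have "nat (5 * int k - 2) = 5*k-2" unfolding idx by (rule nat_int)
  moreover have "5 * int k - 2 \<noteq> -3" "5 * int k - 2 \<noteq> -2" using False by auto
  ultimately show ?thesis using False by (simp add: al_def coordC_def)
qed (simp add: al_def coordC_def)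

lemma al_alpha: "j \<ge> 1 \<Longrightarrow> al \<alpha> y2 z3 (int j) = \<alpha> j"
  by (simp add: al_def)

lemma blk_eq:
  assumes "k \<ge> 1"
  shows "blk x1 x3 y2 z3 \<alpha> k =
    {(\<alpha> (5*k-4), coordB y2 \<alpha> k, coordC z3 \<alpha> k), (\<alpha> (5*k-1), \<alpha> (5*k), coordC z3 \<alpha> k),
     (\<alpha> (5*k-4), \<alpha> (5*k), coordC z3 \<alpha> (k-1)), (\<alpha> (5*k-1), coordB y2 \<alpha> k, x3),
     (x1, coordB y2 \<alpha> (k-1), coordC z3 \<alpha> k)}"
proof -
  have "5 * int k - 4 = int (5*k-4)" "5 * int k - 1 = int (5*k-1)" "5 * int k = int (5*k)"
    "5 * int k - 7 = 5 * int (k-1) - 2" "5 * int k - 8 = 5 * int (k-1) - 3"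
    using assms by auto
  moreover have "5*k-4 \<ge> 1" "5*k-1 \<ge> 1" "5*k \<ge> 1" using assms by auto
  ultimately have al_vals:
    "al \<alpha> y2 z3 (5 * int k - 4) = \<alpha> (5*k-4)" "al \<alpha> y2 z3 (5 * int k - 1) = \<alpha> (5*k-1)"
    "al \<alpha> y2 z3 (5 * int k) = \<alpha> (5*k)"
    "al \<alpha> y2 z3 (5 * int k - 7) = coordC z3 \<alpha> (k-1)"
    "al \<alpha> y2 z3 (5 * int k - 8) = coordB y2 \<alpha> (k-1)"
    by (simp_all only: al_alpha al_coordB al_coordC)
  show ?thesis
    unfolding blk_def Let_def al_vals al_coordB al_coordC ..
qed

lemma Fset_eq:
  "Fset x1 y1 x2 y2 x3 z3 \<alpha> n =
     {(\<alpha> (5*n-1), y2, z3), (x1, x2, x3), (y1, y2, x3), (y1, x2, z3)} \<union>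
     (\<Union>k\<in>{1..n}. {(\<alpha> (5*k-4), coordB y2 \<alpha> k, coordC z3 \<alpha> k), (\<alpha> (5*k-1), \<alpha> (5*k), coordC z3 \<alpha> k),
       (\<alpha> (5*k-4), \<alpha> (5*k), coordC z3 \<alpha> (k-1)), (\<alpha> (5*k-1), coordB y2 \<alpha> k, x3),
       (x1, coordB y2 \<alpha> (k-1), coordC z3 \<alpha> k)})"
proof -
  have "(\<Union>k\<in>{1..n}. blk x1 x3 y2 z3 \<alpha> k) =
     (\<Union>k\<in>{1..n}. {(\<alpha> (5*k-4), coordB y2 \<alpha> k, coordC z3 \<alpha> k), (\<alpha> (5*k-1), \<alpha> (5*k), coordC z3 \<alpha> k),
       (\<alpha> (5*k-4), \<alpha> (5*k), coordC z3 \<alpha> (k-1)), (\<alpha> (5*k-1), coordB y2 \<alpha> k, x3),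
       (x1, coordB y2 \<alpha> (k-1), coordC z3 \<alpha> k)})"
    by (rule SUP_cong) (simp_all add: blk_eq)
  then show ?thesis unfolding Fset_def Dset_def by auto
qed

lemma Fset_subset:
  assumes "x1 \<in> X1" "y1 \<in> X1" "x2 \<in> X2" "y2 \<in> X2" "x3 \<in> X3" "z3 \<in> X3"
    and "\<And>k. k \<ge> 1 \<Longrightarrow> \<alpha> (5*k-4) \<in> X1 \<and> \<alpha> (5*k-1) \<in> X1"
    and "\<And>k. k \<ge> 1 \<Longrightarrow> \<alpha> (5*k-3) \<in> X2 \<and> \<alpha> (5*k) \<in> X2"
    and "\<And>k. k \<ge> 1 \<Longrightarrow> \<alpha> (5*k-2) \<in> X3"
    and "n \<ge> 1"
  shows "Fset x1 y1 x2 y2 x3 z3 \<alpha> n \<subseteq> X1 \<times> X2 \<times> X3"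
proof -
  have "coordB y2 \<alpha> k \<in> X2" "coordC z3 \<alpha> k \<in> X3" for k
    using assms by (simp_all add: coordB_def coordC_def)
  then show ?thesis unfolding Fset_eq using assms by auto
qed

lemma extend_along_inj:
  assumes "inj_on \<alpha> A"
  shows "\<exists>U. (\<forall>j\<in>A. U (\<alpha> j) = g j) \<and> (\<forall>w. w \<notin> \<alpha> ` A \<longrightarrow> U w = W w)"
proof -
  define U where "U w = (if w \<in> \<alpha> ` A then g (inv_into A \<alpha> w) else W w)" for w
  have "\<forall>j\<in>A. U (\<alpha> j) = g j" using assms by (simp add: U_def)
  moreover have "\<forall>w. w \<notin> \<alpha> ` A \<longrightarrow> U w = W w" by (simp add: U_def)
  ultimately show ?thesis by blast
qed

(* Interleaving five sequences into one, so that index 5k-4+i carries the i-th sequence at k;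
   this encodes the values of a potential on alpha_1, alpha_2, .... *)
definition interleave5 ::
  "(nat \<Rightarrow> 'b) \<Rightarrow> (nat \<Rightarrow> 'b) \<Rightarrow> (nat \<Rightarrow> 'b) \<Rightarrow> (nat \<Rightarrow> 'b) \<Rightarrow> (nat \<Rightarrow> 'b) \<Rightarrow> nat \<Rightarrow> 'b"
  where
  "interleave5 a b c d e j = ([e, a, b, c, d] ! (j mod 5)) ((j + 4) div 5)"

lemma interleave5_at:
  assumes "k \<ge> 1"
  shows "interleave5 a b c d e (5*k-4) = a k" "interleave5 a b c d e (5*k-3) = b k"
    "interleave5 a b c d e (5*k-2) = c k" "interleave5 a b c d e (5*k-1) = d k"
    "interleave5 a b c d e (5*k) = e k"
proof -
  obtain m where k: "k = Suc m" using assms by (cases k) auto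
  have "5*k-4 = 5*m+1" "5*k-3 = 5*m+2" "5*k-2 = 5*m+3" "5*k-1 = 5*m+4" "5*k = 5*m+5"
    using k by simp_all
  then show "interleave5 a b c d e (5*k-4) = a k" "interleave5 a b c d e (5*k-3) = b k"
    "interleave5 a b c d e (5*k-2) = c k" "interleave5 a b c d e (5*k-1) = d k"
    "interleave5 a b c d e (5*k) = e k"
    using k by (simp_all add: interleave5_def mod_Suc)
qed

(* All coordinates occurring in F_n are distinct, so a single potential U can take any
   prescribed values on them. *)
lemma coordinate_labelling:
  assumes inj: "inj_on \<alpha> {1..}" and dist: "distinct [x1, x2, x3, y1, y2, z3]"
    and fresh: "{x1, x2, x3, y1, y2, z3} \<inter> \<alpha> ` {1..} = {}"
  obtains U where "U x1 = 0" "U x2 = 0" "U x3 = X" "U y1 = y"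
    "\<And>k. U (coordB y2 \<alpha> k) = b k" "\<And>k. U (coordC z3 \<alpha> k) = c k"
    "\<And>k. k \<ge> 1 \<Longrightarrow> U (\<alpha> (5*k-4)) = a k"
    "\<And>k. k \<ge> 1 \<Longrightarrow> U (\<alpha> (5*k-1)) = d k"
    "\<And>k. k \<ge> 1 \<Longrightarrow> U (\<alpha> (5*k)) = e k"
proof -
  define W where "W w = (if w = x3 then X else if w = y1 then y else if w = y2 then b 0
    else if w = z3 then c 0 else 0)" for w
  obtain U where U_alpha: "\<forall>j\<in>{1..}. U (\<alpha> j) = interleave5 a b c d e j"
    and U_W: "\<forall>w. w \<notin> \<alpha> ` {1..} \<longrightarrow> U w = W w"
    using extend_along_inj[OF inj] by blast
  have special: "U x1 = 0" "U x2 = 0" "U x3 = X" "U y1 = y" "U y2 = b 0" "U z3 = c 0"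
    using U_W fresh dist by (auto simp: W_def)
  have at: "U (\<alpha> (5*k-4)) = a k" "U (\<alpha> (5*k-3)) = b k" "U (\<alpha> (5*k-2)) = c k"
    "U (\<alpha> (5*k-1)) = d k" "U (\<alpha> (5*k)) = e k" if "k \<ge> 1" for k
    using U_alpha interleave5_at[OF that] that by auto
  have "U (coordB y2 \<alpha> k) = b k" "U (coordC z3 \<alpha> k) = c k" for k
    using special at by (cases "k = 0"; simp add: coordB_def coordC_def)+
  then show ?thesis using that special at by blast
qed

(* Goodness of F_n: a solution of M_n v = (values of f, shifted by f(a_1) on the rows with
   third coordinate x3) yields one potential U decomposing f on F_n. *)
lemma Fset_decomposable:
  fixes f :: "'a \<times> 'a \<times> 'a \<Rightarrow> complex"
  assumes n: "n \<ge> 1" and inj: "inj_on \<alpha> {1..}" and dist: "distinct [x1, x2, x3, y1, y2, z3]"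
    and fresh: "{x1, x2, x3, y1, y2, z3} \<inter> \<alpha> ` {1..} = {}"
  shows "\<exists>U. \<forall>(w1, w2, w3) \<in> Fset x1 y1 x2 y2 x3 z3 \<alpha> n. f (w1, w2, w3) = U w1 + U w2 + U w3"
proof -
  let ?B = "coordB y2 \<alpha>" and ?C = "coordC z3 \<alpha>"
  define X where "X = f (x1, x2, x3)"
  obtain y a b c d e where sys: "Mn_system n
      (\<lambda>k. f (\<alpha> (5*k-4), ?B k, ?C k)) (\<lambda>k. f (\<alpha> (5*k-1), \<alpha> (5*k), ?C k))
      (\<lambda>k. f (\<alpha> (5*k-4), \<alpha> (5*k), ?C (k-1))) (\<lambda>k. f (\<alpha> (5*k-1), ?B k, x3) - X)
      (\<lambda>k. f (x1, ?B (k-1), ?C k))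
      (f (y1, y2, x3) - X) (f (y1, x2, z3)) (f (\<alpha> (5*n-1), y2, z3)) y a b c d e"
    using Mn_system_solvable[OF n] by blast
  then have init: "y + b 0 = f (y1, y2, x3) - X" "y + c 0 = f (y1, x2, z3)"
      "d n + b 0 + c 0 = f (\<alpha> (5*n-1), y2, z3)"
    and blk: "\<And>k. k \<in> {1..n} \<Longrightarrow>
      a k + b k + c k = f (\<alpha> (5*k-4), ?B k, ?C k) \<and>
      d k + e k + c k = f (\<alpha> (5*k-1), \<alpha> (5*k), ?C k) \<and>
      a k + e k + c (k-1) = f (\<alpha> (5*k-4), \<alpha> (5*k), ?C (k-1)) \<and>
      d k + b k = f (\<alpha> (5*k-1), ?B k, x3) - X \<and>
      b (k-1) + c k = f (x1, ?B (k-1), ?C k)"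
    unfolding Mn_system_def by blast+
  obtain U where U: "U x1 = 0" "U x2 = 0" "U x3 = X" "U y1 = y"
    "\<And>k. U (?B k) = b k" "\<And>k. U (?C k) = c k"
    "\<And>k. k \<ge> 1 \<Longrightarrow> U (\<alpha> (5*k-4)) = a k" "\<And>k. k \<ge> 1 \<Longrightarrow> U (\<alpha> (5*k-1)) = d k"
    "\<And>k. k \<ge> 1 \<Longrightarrow> U (\<alpha> (5*k)) = e k"
    using coordinate_labelling[OF inj dist fresh,
        where X = X and y = y and a = a and b = b and c = c and d = d and e = e]
    by blast
  have Uy2: "U y2 = b 0" and Uz3: "U z3 = c 0"
    using U(5)[of 0] U(6)[of 0] by (simp_all add: coordB_def coordC_def)
  have "f (\<alpha> (5*n-1), y2, z3) = U (\<alpha> (5*n-1)) + U y2 + U z3"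
    using init(3) U(8)[OF n] Uy2 Uz3 by simp
  moreover have "f (x1, x2, x3) = U x1 + U x2 + U x3"
    using U(1-3) X_def by simp
  moreover have "f (y1, y2, x3) = U y1 + U y2 + U x3"
    using init(1) U(3,4) Uy2 by simp
  moreover have "f (y1, x2, z3) = U y1 + U x2 + U z3"
    using init(2) U(2,4) Uz3 by simp
  ultimately have special: "\<forall>(w1, w2, w3) \<in> {(\<alpha> (5*n-1), y2, z3), (x1, x2, x3), (y1, y2, x3), (y1, x2, z3)}.
      f (w1, w2, w3) = U w1 + U w2 + U w3"
    by simp
  have block: "\<forall>(w1, w2, w3) \<in> {(\<alpha> (5*k-4), ?B k, ?C k), (\<alpha> (5*k-1), \<alpha> (5*k), ?C k),
       (\<alpha> (5*k-4), \<alpha> (5*k), ?C (k-1)), (\<alpha> (5*k-1), ?B k, x3), (x1, ?B (k-1), ?C k)}.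
      f (w1, w2, w3) = U w1 + U w2 + U w3" if k: "k \<in> {1..n}" for k
  proof -
    have "k \<ge> 1" using k by simp
    then show ?thesis using blk[OF k] U(1,3,5,6) U(7-9)[OF \<open>k \<ge> 1\<close>] by simp
  qed
  have "\<forall>(w1, w2, w3) \<in> Fset x1 y1 x2 y2 x3 z3 \<alpha> n. f (w1, w2, w3) = U w1 + U w2 + U w3"
    unfolding Fset_eq using special block by blast
  then show ?thesis by blast
qed

(* Maximality of F_n: a null potential, normalised to vanish at x1, x2, x3, solves the
   homogeneous system, hence vanishes at every coordinate of F_n and so on the whole box. *)
lemma Fset_trivial_kernel:
  fixes u1 u2 u3 :: "'a \<Rightarrow> complex"
  assumes n: "n \<ge> 1"
    and vanish: "\<forall>(w1, w2, w3) \<in> Fset x1 y1 x2 y2 x3 z3 \<alpha> n. u1 w1 + u2 w2 + u3 w3 = 0"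
  defines "F \<equiv> Fset x1 y1 x2 y2 x3 z3 \<alpha> n"
  shows "\<forall>(w1, w2, w3) \<in> fst ` F \<times> (fst \<circ> snd) ` F \<times> (snd \<circ> snd) ` F. u1 w1 + u2 w2 + u3 w3 = 0"
proof -
  let ?B = "coordB y2 \<alpha>" and ?C = "coordC z3 \<alpha>"
  define p where "p w = u1 w - u1 x1" for w
  define q where "q w = u2 w - u2 x2" for w
  define r where "r w = u3 w - u3 x3" for w
  have van: "u1 w1 + u2 w2 + u3 w3 = 0" if "(w1, w2, w3) \<in> F" for w1 w2 w3
    using vanish that unfolding F_def by blast
  have base: "u1 x1 + u2 x2 + u3 x3 = 0" by (rule van) (simp add: F_def Fset_eq)
  have pqr: "p w1 + q w2 + r w3 = 0" if "(w1, w2, w3) \<in> F" for w1 w2 w3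
  proof -
    have "p w1 + q w2 + r w3 = (u1 w1 + u2 w2 + u3 w3) - (u1 x1 + u2 x2 + u3 x3)"
      by (simp add: p_def q_def r_def algebra_simps)
    then show ?thesis using van[OF that] base by simp
  qed
  have normal: "p x1 = 0" "q x2 = 0" "r x3 = 0" by (simp_all add: p_def q_def r_def)
  have B0: "?B 0 = y2" and C0: "?C 0 = z3" by (simp_all add: coordB_def coordC_def)
  have special: "(\<alpha> (5*n-1), y2, z3) \<in> F" "(y1, y2, x3) \<in> F" "(y1, x2, z3) \<in> F"
    by (simp_all add: F_def Fset_eq)
  have block: "(\<alpha> (5*k-4), ?B k, ?C k) \<in> F" "(\<alpha> (5*k-1), \<alpha> (5*k), ?C k) \<in> F"
    "(\<alpha> (5*k-4), \<alpha> (5*k), ?C (k-1)) \<in> F" "(\<alpha> (5*k-1), ?B k, x3) \<in> F" "(x1, ?B (k-1), ?C k) \<in> F"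
    if "k \<in> {1..n}" for k
    using that unfolding F_def Fset_eq by blast+
  have "Mn_system n (\<lambda>_. 0) (\<lambda>_. 0) (\<lambda>_. 0) (\<lambda>_. 0) (\<lambda>_. 0) 0 0 0 (p y1)
      (\<lambda>k. p (\<alpha> (5*k-4))) (\<lambda>k. q (?B k)) (\<lambda>k. r (?C k)) (\<lambda>k. p (\<alpha> (5*k-1))) (\<lambda>k. q (\<alpha> (5*k)))"
    unfolding Mn_system_def B0 C0
    using pqr[OF special(1)] pqr[OF special(2)] pqr[OF special(3)] normal
      pqr[OF block(1)] pqr[OF block(2)] pqr[OF block(3)] pqr[OF block(4)] pqr[OF block(5)]
    by simp
  note zero = Mn_system_kernel[OF n this]
  have qB: "q (?B k) = 0" and rC: "r (?C k) = 0" if "k \<le> n" for k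
    using zero(2)[OF that] by simp_all
  have "q y2 = 0" "r z3 = 0" using qB[of 0] rC[of 0] by (simp_all add: B0 C0)
  then have coords: "p w1 = 0 \<and> q w2 = 0 \<and> r w3 = 0" if "(w1, w2, w3) \<in> F" for w1 w2 w3
    using that zero(1) zero(3) qB rC normal n unfolding F_def Fset_eq by auto
  have "u1 t1 + u2 t2 + u3 t3 = 0"
    if "(t1, t2, t3) \<in> fst ` F \<times> (fst \<circ> snd) ` F \<times> (snd \<circ> snd) ` F" for t1 t2 t3
  proof -
    have "p t1 = 0" "q t2 = 0" "r t3 = 0" using that coords by force+
    then show ?thesis using base by (simp add: p_def q_def r_def)
  qed
  then show ?thesis by blast
qed

theorem mainTheorem6:
  fixes X1 X2 X3 :: "'a set" and x1 y1 x2 y2 x3 z3 :: 'a and \<alpha> :: "nat \<Rightarrow> 'a" and n :: nat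
  assumes disj: "X1 \<inter> X2 = {}" "X1 \<inter> X3 = {}" "X2 \<inter> X3 = {}"
    and ne: "X1 \<noteq> {}" "X2 \<noteq> {}" "X3 \<noteq> {}"
    and mem: "x1 \<in> X1" "y1 \<in> X1" "x2 \<in> X2" "y2 \<in> X2" "x3 \<in> X3" "z3 \<in> X3"
    and mem\<alpha>1: "\<And>k. k \<ge> 1 \<Longrightarrow> \<alpha> (5*k-4) \<in> X1 \<and> \<alpha> (5*k-1) \<in> X1"
    and mem\<alpha>2: "\<And>k. k \<ge> 1 \<Longrightarrow> \<alpha> (5*k-3) \<in> X2 \<and> \<alpha> (5*k) \<in> X2"
    and mem\<alpha>3: "\<And>k. k \<ge> 1 \<Longrightarrow> \<alpha> (5*k-2) \<in> X3"
    and dist: "x1 \<noteq> y1" "x2 \<noteq> y2" "x3 \<noteq> z3"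
    and inj: "inj_on \<alpha> {1..}"
    and notin: "x1 \<notin> \<alpha> ` {1..}" "y1 \<notin> \<alpha> ` {1..}" "x2 \<notin> \<alpha> ` {1..}"
               "y2 \<notin> \<alpha> ` {1..}" "x3 \<notin> \<alpha> ` {1..}" "z3 \<notin> \<alpha> ` {1..}"
    and n: "n \<ge> 1"
  shows "full X1 X2 X3 (Fset x1 y1 x2 y2 x3 z3 \<alpha> n)"
proof -
  let ?F = "Fset x1 y1 x2 y2 x3 z3 \<alpha> n"
  have distinct: "distinct [x1, x2, x3, y1, y2, z3]" using disj mem dist by auto
  have fresh: "{x1, x2, x3, y1, y2, z3} \<inter> \<alpha> ` {1..} = {}" using notin by auto
  have "\<exists>u1 u2 u3 :: 'a \<Rightarrow> complex. \<forall>(w1, w2, w3) \<in> ?F. f (w1, w2, w3) = u1 w1 + u2 w2 + u3 w3"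
    for f :: "'a \<times> 'a \<times> 'a \<Rightarrow> complex"
    using Fset_decomposable[OF n inj distinct fresh, of f] by blast
  then have "good X1 X2 X3 ?F"
    unfolding good_def using Fset_subset[OF mem mem\<alpha>1 mem\<alpha>2 mem\<alpha>3 n] by blast
  then show ?thesis
    by (rule full_if_trivial_kernel) (rule Fset_trivial_kernel[OF n])
qed

end
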